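(* Let $V=\bigoplus_{i=1}^m B_i$ be a near vector space over a commutative $F$ with finite block type (blocks $B_1,\dots,B_m$). Then every ultrapower $\prod V/\mathcal U$ of $V$ (as an $\mathcal L_{Fnvs}$-structure) is a near vector space over $F$.
   Context: An F-group is a pair $(V,F)$ where $(V,+)$ is a group and $F$ is a set of endomorphisms of $V$ such that: the maps $0,1,-1$ lie in $F$; $F\setminus\{0\}$ is a subgroup of $\mathrm{Aut}(V,+)$ under composition; and if $\alpha x=\beta x$ with $\alpha,\beta\in F$, $x\in V$ then $\alpha=\beta$ or $x=0$. The quasi-kernel $Q(V)$ is the set of $u\in V$ such that for all $\alpha,\beta\in F$ there is $\gamma\in F$ with $\alpha u+\beta u=\gamma u$. $(V,F)$ is a near vector space if $Q(V)$ generates $(V,+)$; commutative means $\alpha(\beta v)=\beta(\alpha v)$. The blocks of $V$ are the summands in André's decomposition of $V$ into maximal regular near vector subspaces (regular: any two nonzero quasi-kernel elements $u,v$ are compatible, i.e. $u+\lambda v\in Q(V)$ for some $\lambda\in F\setminus\{0\}$), each nonzero element of $Q(V)$ lying in exactly one block. Finite block type means finitely many blocks. The language $\mathcal L_{Fnvs}=\{+,0,(\lambda)_{\lambda\in F}\}$ has a unary function symbol for each $\lambda\in F$ interpreted as its action. *)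

theory Defs
  imports "HOL-Algebra.Algebra"
begin

text \<open>The group (V,+) is represented as an HOL-Algebra group G (written
multiplicatively: the group operation of G is the addition of V, the unit of G is 0).
Endomorphisms are extensional functions on the carrier.\<close>

definition endo_zero :: "('v, 'b) monoid_scheme \<Rightarrow> ('v \<Rightarrow> 'v)" where
  "endo_zero G = (\<lambda>x\<in>carrier G. \<one>\<^bsub>G\<^esub>)"

definition endo_one :: "('v, 'b) monoid_scheme \<Rightarrow> ('v \<Rightarrow> 'v)" where
  "endo_one G = (\<lambda>x\<in>carrier G. x)"

definition endo_neg :: "('v, 'b) monoid_scheme \<Rightarrow> ('v \<Rightarrow> 'v)" where
  "endo_neg G = (\<lambda>x\<in>carrier G. inv\<^bsub>G\<^esub> x)"

definition fgroup :: "('v, 'b) monoid_scheme \<Rightarrow> ('v \<Rightarrow> 'v) set \<Rightarrow> bool" where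
  "fgroup G F \<longleftrightarrow> group G
     \<and> F \<subseteq> hom G G \<inter> extensional (carrier G)
     \<and> endo_zero G \<in> F \<and> endo_one G \<in> F \<and> endo_neg G \<in> F
     \<and> subgroup (F - {endo_zero G}) (AutoGroup G)
     \<and> (\<forall>\<alpha>\<in>F. \<forall>\<beta>\<in>F. \<forall>x\<in>carrier G. \<alpha> x = \<beta> x \<longrightarrow> \<alpha> = \<beta> \<or> x = \<one>\<^bsub>G\<^esub>)"

definition qkernel :: "('v, 'b) monoid_scheme \<Rightarrow> ('v \<Rightarrow> 'v) set \<Rightarrow> 'v set" where
  "qkernel G F = {u \<in> carrier G. \<forall>\<alpha>\<in>F. \<forall>\<beta>\<in>F. \<exists>\<gamma>\<in>F. \<alpha> u \<otimes>\<^bsub>G\<^esub> \<beta> u = \<gamma> u}"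

definition near_vector_space :: "('v, 'b) monoid_scheme \<Rightarrow> ('v \<Rightarrow> 'v) set \<Rightarrow> bool" where
  "near_vector_space G F \<longleftrightarrow> fgroup G F \<and> generate G (qkernel G F) = carrier G"

definition commutative_F :: "('v, 'b) monoid_scheme \<Rightarrow> ('v \<Rightarrow> 'v) set \<Rightarrow> bool" where
  "commutative_F G F \<longleftrightarrow> (\<forall>\<alpha>\<in>F. \<forall>\<beta>\<in>F. \<forall>v\<in>carrier G. \<alpha> (\<beta> v) = \<beta> (\<alpha> v))"

definition compatible :: "('v, 'b) monoid_scheme \<Rightarrow> ('v \<Rightarrow> 'v) set \<Rightarrow> 'v \<Rightarrow> 'v \<Rightarrow> bool" where
  "compatible G F u v \<longleftrightarrow> (\<exists>l\<in>F - {endo_zero G}. u \<otimes>\<^bsub>G\<^esub> l v \<in> qkernel G F)"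

definition regular_nvs :: "('v, 'b) monoid_scheme \<Rightarrow> ('v \<Rightarrow> 'v) set \<Rightarrow> bool" where
  "regular_nvs G F \<longleftrightarrow> near_vector_space G F
     \<and> (\<forall>u\<in>qkernel G F - {\<one>\<^bsub>G\<^esub>}. \<forall>v\<in>qkernel G F - {\<one>\<^bsub>G\<^esub>}. compatible G F u v)"

definition restrict_F :: "'v set \<Rightarrow> ('v \<Rightarrow> 'v) set \<Rightarrow> ('v \<Rightarrow> 'v) set" where
  "restrict_F W F = (\<lambda>\<alpha>. restrict \<alpha> W) ` F"

definition regular_subspace :: "('v, 'b) monoid_scheme \<Rightarrow> ('v \<Rightarrow> 'v) set \<Rightarrow> 'v set \<Rightarrow> bool" where
  "regular_subspace G F W \<longleftrightarrow> subgroup W G \<and> (\<forall>\<alpha>\<in>F. \<alpha> ` W \<subseteq> W)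
     \<and> regular_nvs (G\<lparr>carrier := W\<rparr>) (restrict_F W F)"

definition blocks :: "('v, 'b) monoid_scheme \<Rightarrow> ('v \<Rightarrow> 'v) set \<Rightarrow> 'v set set" where
  "blocks G F = {W. regular_subspace G F W \<and>
                    (\<forall>W'. regular_subspace G F W' \<and> W \<subseteq> W' \<longrightarrow> W' = W)}"

definition finite_block_type :: "('v, 'b) monoid_scheme \<Rightarrow> ('v \<Rightarrow> 'v) set \<Rightarrow> bool" where
  "finite_block_type G F \<longleftrightarrow> finite (blocks G F)"

definition is_ultrafilter :: "'i filter \<Rightarrow> bool" where
  "is_ultrafilter U \<longleftrightarrow> U \<noteq> bot \<and> (\<forall>P. eventually P U \<or> eventually (\<lambda>i. \<not> P i) U)"

definition up_class :: "('v, 'b) monoid_scheme \<Rightarrow> 'i filter \<Rightarrow> ('i \<Rightarrow> 'v) \<Rightarrow> ('i \<Rightarrow> 'v) set" where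
  "up_class G U f = {g \<in> UNIV \<rightarrow> carrier G. eventually (\<lambda>i. f i = g i) U}"

definition up_carrier :: "('v, 'b) monoid_scheme \<Rightarrow> 'i filter \<Rightarrow> ('i \<Rightarrow> 'v) set set" where
  "up_carrier G U = up_class G U ` (UNIV \<rightarrow> carrier G)"

definition up_mult :: "('v, 'b) monoid_scheme \<Rightarrow> 'i filter \<Rightarrow>
    ('i \<Rightarrow> 'v) set \<Rightarrow> ('i \<Rightarrow> 'v) set \<Rightarrow> ('i \<Rightarrow> 'v) set" where
  "up_mult G U A B = {h \<in> UNIV \<rightarrow> carrier G.
      \<exists>f\<in>A. \<exists>g\<in>B. eventually (\<lambda>i. h i = f i \<otimes>\<^bsub>G\<^esub> g i) U}"

definition ultrapower :: "('v, 'b) monoid_scheme \<Rightarrow> 'i filter \<Rightarrow> ('i \<Rightarrow> 'v) set monoid" where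
  "ultrapower G U = \<lparr>carrier = up_carrier G U, monoid.mult = up_mult G U,
                      one = up_class G U (\<lambda>_. \<one>\<^bsub>G\<^esub>)\<rparr>"

text \<open>Interpretation in the ultrapower of the function symbol for \<alpha> \<in> F.\<close>
definition up_act :: "('v, 'b) monoid_scheme \<Rightarrow> 'i filter \<Rightarrow> ('v \<Rightarrow> 'v) \<Rightarrow>
    ('i \<Rightarrow> 'v) set \<Rightarrow> ('i \<Rightarrow> 'v) set" where
  "up_act G U \<alpha> = (\<lambda>A\<in>up_carrier G U. {h \<in> UNIV \<rightarrow> carrier G.
      \<exists>f\<in>A. eventually (\<lambda>i. h i = \<alpha> (f i)) U})"

end

theory Submission
  imports Defs
begin

text \<open>Each nonzero \<open>u\<close> in the quasi-kernel determines the block containing it: the set of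
  \<open>w\<close> on which the addition table of \<open>F\<close> at \<open>u\<close> is valid, i.e. \<open>\<alpha> w + \<beta> w = \<gamma> w\<close>
  whenever \<open>\<alpha> u + \<beta> u = \<gamma> u\<close>. Commutativity of \<open>F\<close> makes this a regular near vector
  subspace, and it is maximal because compatibility with \<open>u\<close> forces an element onto the
  table of \<open>u\<close>. Finite block type therefore says that \<open>V\<close> is generated by finitely many
  subgroups, each with a uniform addition table. In a power of \<open>V\<close> modulo a filter, a
  class of sequences with values in one block obeys that same table and so lies in the
  quasi-kernel, and every class is a product of finitely many such classes. The F-group
  axioms transfer componentwise; only properness of the filter is used.\<close>

section \<open>F-groups\<close>

lemma (in group) AutoGroup_mult:
  "a \<in> auto G \<Longrightarrow> b \<in> auto G \<Longrightarrow> a \<otimes>\<^bsub>AutoGroup G\<^esub> b = compose (carrier G) a b"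
  by (simp add: AutoGroup_def BijGroup_def auto_def)

lemma carrier_AutoGroup: "carrier (AutoGroup G) = auto G"
  by (simp add: AutoGroup_def)

lemma AutoGroup_one: "\<one>\<^bsub>AutoGroup G\<^esub> = endo_one G"
  by (simp add: AutoGroup_def BijGroup_def endo_one_def)

lemma compose_eq_endo_one_apply:
  "compose (carrier G) a b = endo_one G \<Longrightarrow> y \<in> carrier G \<Longrightarrow> a (b y) = y"
  by (metis compose_eq endo_one_def restrict_apply')

lemma (in group) auto_of_compose_eq_endo_one:
  assumes "a \<in> hom G G \<inter> extensional (carrier G)" and "b \<in> carrier G \<rightarrow> carrier G"
    and "compose (carrier G) a b = endo_one G" "compose (carrier G) b a = endo_one G"
  shows "a \<in> auto G"
proof -
  have "bij_betw a (carrier G) (carrier G)"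
    by (rule bij_betw_byWitness[where f' = b])
      (use assms compose_eq_endo_one_apply in \<open>auto simp: hom_def\<close>)
  then show ?thesis
    using assms(1) by (auto simp: auto_def Bij_def)
qed

lemma fgroupI:
  fixes G (structure)
  assumes "group G"
    and hom: "F \<subseteq> hom G G \<inter> extensional (carrier G)"
    and zero: "endo_zero G \<in> F" and one: "endo_one G \<in> F" and neg: "endo_neg G \<in> F"
    and nontrivial: "x\<^sub>0 \<in> carrier G" "x\<^sub>0 \<noteq> \<one>\<^bsub>G\<^esub>"
    and compose: "\<And>\<alpha> \<beta>. \<alpha> \<in> F \<Longrightarrow> \<beta> \<in> F \<Longrightarrow> compose (carrier G) \<alpha> \<beta> \<in> F"
    and inverse: "\<And>\<alpha>. \<alpha> \<in> F \<Longrightarrow> \<alpha> \<noteq> endo_zero G \<Longrightarrow>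
       \<exists>\<beta>\<in>F. compose (carrier G) \<alpha> \<beta> = endo_one G \<and> compose (carrier G) \<beta> \<alpha> = endo_one G"
    and fpf: "\<forall>\<alpha>\<in>F. \<forall>\<beta>\<in>F. \<forall>x\<in>carrier G. \<alpha> x = \<beta> x \<longrightarrow> \<alpha> = \<beta> \<or> x = \<one>\<^bsub>G\<^esub>"
  shows "fgroup G F"
proof -
  interpret group G by fact
  have closed: "\<alpha> x \<in> carrier G" if "\<alpha> \<in> F" "x \<in> carrier G" for \<alpha> x
    using hom that by (auto simp: hom_def)
  have nonzero_apply: "\<alpha> x \<noteq> \<one>" if "\<alpha> \<in> F" "\<alpha> \<noteq> endo_zero G" "x \<in> carrier G" "x \<noteq> \<one>" for \<alpha> x
  proof
    assume "\<alpha> x = \<one>"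
    then have "\<alpha> x = endo_zero G x"
      using that by (simp add: endo_zero_def)
    then show False
      using fpf zero that by blast
  qed
  have auto: "\<alpha> \<in> auto G" if \<alpha>: "\<alpha> \<in> F - {endo_zero G}" for \<alpha>
  proof -
    obtain \<beta> where "\<beta> \<in> F" "compose (carrier G) \<alpha> \<beta> = endo_one G"
      "compose (carrier G) \<beta> \<alpha> = endo_one G"
      using inverse[of \<alpha>] \<alpha> by blast
    then show ?thesis
      using \<alpha> hom closed by (intro auto_of_compose_eq_endo_one) auto
  qed
  have "subgroup (F - {endo_zero G}) (AutoGroup G)"
  proof (rule subgroup.intro)
    show "F - {endo_zero G} \<subseteq> carrier (AutoGroup G)"
      using auto by (auto simp: carrier_AutoGroup)
    have "endo_one G x\<^sub>0 \<noteq> endo_zero G x\<^sub>0"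
      using nontrivial by (simp add: endo_one_def endo_zero_def)
    then show "\<one>\<^bsub>AutoGroup G\<^esub> \<in> F - {endo_zero G}"
      using one by (auto simp: AutoGroup_one)
  next
    fix \<alpha> \<beta> assume \<alpha>: "\<alpha> \<in> F - {endo_zero G}" and \<beta>: "\<beta> \<in> F - {endo_zero G}"
    have "compose (carrier G) \<alpha> \<beta> x\<^sub>0 \<noteq> endo_zero G x\<^sub>0"
      using \<alpha> \<beta> nontrivial closed nonzero_apply by (simp add: compose_eq endo_zero_def)
    then show "\<alpha> \<otimes>\<^bsub>AutoGroup G\<^esub> \<beta> \<in> F - {endo_zero G}"
      using \<alpha> \<beta> auto compose by (auto simp: AutoGroup_mult)
  next
    fix \<alpha> assume \<alpha>: "\<alpha> \<in> F - {endo_zero G}"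
    then obtain \<beta> where \<beta>: "\<beta> \<in> F" "compose (carrier G) \<alpha> \<beta> = endo_one G"
      "compose (carrier G) \<beta> \<alpha> = endo_one G"
      using inverse by blast
    have "\<beta> (\<alpha> x\<^sub>0) \<noteq> endo_zero G (\<alpha> x\<^sub>0)"
      using compose_eq_endo_one_apply[OF \<beta>(3)] \<alpha> nontrivial closed by (simp add: endo_zero_def)
    then have \<beta>_nonzero: "\<beta> \<in> F - {endo_zero G}"
      using \<beta>(1) by auto
    interpret Aut: group "AutoGroup G" by (rule AutoGroup)
    have "inv\<^bsub>AutoGroup G\<^esub> \<alpha> = \<beta>"
      using \<alpha> \<beta> \<beta>_nonzero auto
      by (intro Aut.inv_equality) (auto simp: AutoGroup_mult AutoGroup_one carrier_AutoGroup)
    then show "inv\<^bsub>AutoGroup G\<^esub> \<alpha> \<in> F - {endo_zero G}"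
      using \<beta>_nonzero by simp
  qed
  then show ?thesis
    unfolding fgroup_def using assms by blast
qed

lemma fgroup_imp_comm_group:
  fixes G (structure)
  assumes "fgroup G F"
  shows "comm_group G"
proof -
  interpret group G
    using assms by (simp add: fgroup_def)
  have "endo_neg G \<in> hom G G"
    using assms by (auto simp: fgroup_def)
  then have inv_mult: "inv (x \<otimes>\<^bsub>G\<^esub> y) = inv x \<otimes>\<^bsub>G\<^esub> inv y"
    if "x \<in> carrier G" "y \<in> carrier G" for x y
    using that by (auto simp: hom_def endo_neg_def)
  show ?thesis
  proof (rule group_comm_groupI)
    fix x y assume "x \<in> carrier G" "y \<in> carrier G"
    then show "x \<otimes>\<^bsub>G\<^esub> y = y \<otimes>\<^bsub>G\<^esub> x"
      using inv_mult[of "inv x" "inv y"] by (simp add: inv_mult_group)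
  qed
qed

locale f_group = comm_group G for G (structure) +
  fixes F :: "('a \<Rightarrow> 'a) set"
  assumes fgroup: "fgroup G F"
begin

lemma F_hom: "\<alpha> \<in> F \<Longrightarrow> \<alpha> \<in> hom G G"
  using fgroup by (auto simp: fgroup_def)

lemma F_closed [simp]: "\<alpha> \<in> F \<Longrightarrow> x \<in> carrier G \<Longrightarrow> \<alpha> x \<in> carrier G"
  using F_hom by (auto simp: hom_def)

lemma F_mult: "\<alpha> \<in> F \<Longrightarrow> x \<in> carrier G \<Longrightarrow> y \<in> carrier G \<Longrightarrow> \<alpha> (x \<otimes> y) = \<alpha> x \<otimes> \<alpha> y"
  using F_hom by (auto simp: hom_def)

lemma F_group_hom: "\<alpha> \<in> F \<Longrightarrow> group_hom G G \<alpha>"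
  by (simp add: group_hom_def group_hom_axioms_def F_hom is_group)

lemma F_one [simp]: "\<alpha> \<in> F \<Longrightarrow> \<alpha> \<one> = \<one>"
  using group_hom.hom_one[OF F_group_hom] by simp

lemma F_inv: "\<alpha> \<in> F \<Longrightarrow> x \<in> carrier G \<Longrightarrow> \<alpha> (inv x) = inv (\<alpha> x)"
  using group_hom.hom_inv[OF F_group_hom] by simp

lemma zero_in_F: "endo_zero G \<in> F"
  and one_in_F: "endo_one G \<in> F"
  and neg_in_F: "endo_neg G \<in> F"
  using fgroup by (auto simp: fgroup_def)

lemma F_eq_apply:
  "\<alpha> \<in> F \<Longrightarrow> \<beta> \<in> F \<Longrightarrow> x \<in> carrier G \<Longrightarrow> \<alpha> x = \<beta> x \<Longrightarrow> \<alpha> = \<beta> \<or> x = \<one>"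
  using fgroup by (auto simp: fgroup_def)

lemma endo_zero_apply [simp]: "x \<in> carrier G \<Longrightarrow> endo_zero G x = \<one>"
  by (simp add: endo_zero_def)

lemma F_apply_eq_one_iff:
  "\<alpha> \<in> F \<Longrightarrow> x \<in> carrier G \<Longrightarrow> \<alpha> x = \<one> \<longleftrightarrow> \<alpha> = endo_zero G \<or> x = \<one>"
  using F_eq_apply[OF _ zero_in_F, of \<alpha> x] by auto

lemma F_inj:
  assumes "\<alpha> \<in> F" "\<alpha> \<noteq> endo_zero G" "x \<in> carrier G" "y \<in> carrier G" "\<alpha> x = \<alpha> y"
  shows "x = y"
proof -
  have "\<alpha> (x \<otimes> inv y) = \<one>"
    using assms by (simp add: F_mult F_inv)
  then have "x \<otimes> inv y = \<one>"
    using assms by (simp add: F_apply_eq_one_iff)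
  then show ?thesis
    using assms inv_solve_right'[of \<one> x y] by simp
qed

lemma nonzero_F_subgroup: "subgroup (F - {endo_zero G}) (AutoGroup G)"
  using fgroup by (simp add: fgroup_def)

lemma nonzero_F_subset_auto: "F - {endo_zero G} \<subseteq> auto G"
  using subgroup.subset[OF nonzero_F_subgroup] by (simp add: carrier_AutoGroup)

lemma carrier_nontrivial: "\<exists>x\<in>carrier G. x \<noteq> \<one>"
proof (rule ccontr)
  assume "\<not> (\<exists>x\<in>carrier G. x \<noteq> \<one>)"
  then have "endo_one G = endo_zero G"
    unfolding endo_one_def endo_zero_def by (intro restrict_ext) blast
  moreover have "\<one>\<^bsub>AutoGroup G\<^esub> \<in> F - {endo_zero G}"
    by (rule subgroup.one_closed[OF nonzero_F_subgroup])
  ultimately show False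
    by (simp add: AutoGroup_one)
qed

lemma compose_in_F:
  assumes "\<alpha> \<in> F" "\<beta> \<in> F"
  shows "compose (carrier G) \<alpha> \<beta> \<in> F"
proof (cases "\<alpha> = endo_zero G \<or> \<beta> = endo_zero G")
  case True
  then have "compose (carrier G) \<alpha> \<beta> = endo_zero G"
    using assms unfolding compose_def endo_zero_def by (intro restrict_ext) auto
  then show ?thesis
    using zero_in_F by simp
next
  case False
  then have \<alpha>\<beta>: "\<alpha> \<in> F - {endo_zero G}" "\<beta> \<in> F - {endo_zero G}"
    using assms by auto
  then have "\<alpha> \<otimes>\<^bsub>AutoGroup G\<^esub> \<beta> \<in> F"
    using subgroup.m_closed[OF nonzero_F_subgroup] by blast
  moreover have "\<alpha> \<in> auto G" "\<beta> \<in> auto G"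
    using \<alpha>\<beta> nonzero_F_subset_auto by auto
  ultimately show ?thesis
    by (simp add: AutoGroup_mult)
qed

lemma inverse_in_F:
  assumes "\<alpha> \<in> F" "\<alpha> \<noteq> endo_zero G"
  shows "\<exists>\<beta>\<in>F. compose (carrier G) \<alpha> \<beta> = endo_one G \<and> compose (carrier G) \<beta> \<alpha> = endo_one G"
proof -
  interpret Aut: group "AutoGroup G"
    by (rule AutoGroup)
  have \<alpha>: "\<alpha> \<in> F - {endo_zero G}"
    using assms by auto
  define \<beta> where "\<beta> = inv\<^bsub>AutoGroup G\<^esub> \<alpha>"
  have \<beta>: "\<beta> \<in> F - {endo_zero G}"
    unfolding \<beta>_def by (rule subgroup.m_inv_closed[OF nonzero_F_subgroup \<alpha>])
  have "\<alpha> \<otimes>\<^bsub>AutoGroup G\<^esub> \<beta> = \<one>\<^bsub>AutoGroup G\<^esub>" "\<beta> \<otimes>\<^bsub>AutoGroup G\<^esub> \<alpha> = \<one>\<^bsub>AutoGroup G\<^esub>"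
    unfolding \<beta>_def using \<alpha> nonzero_F_subset_auto by (auto simp: carrier_AutoGroup)
  moreover have "\<alpha> \<in> auto G" "\<beta> \<in> auto G"
    using \<alpha> \<beta> nonzero_F_subset_auto by auto
  ultimately show ?thesis
    using \<beta> by (auto simp: AutoGroup_mult AutoGroup_one)
qed

lemma negation_in_F:
  assumes "\<gamma> \<in> F"
  shows "\<exists>\<nu>\<in>F. \<forall>x\<in>carrier G. \<nu> x = inv (\<gamma> x)"
proof
  show "compose (carrier G) (endo_neg G) \<gamma> \<in> F"
    using compose_in_F[OF neg_in_F assms] .
  show "\<forall>x\<in>carrier G. compose (carrier G) (endo_neg G) \<gamma> x = inv (\<gamma> x)"
    using assms by (simp add: compose_eq endo_neg_def)
qed

end

lemma qkernel_restrict: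
  assumes "W \<subseteq> carrier G"
  shows "qkernel (G\<lparr>carrier := W\<rparr>) (restrict_F W F) = W \<inter> qkernel G F"
  using assms unfolding qkernel_def restrict_F_def by auto

lemma endo_zero_restrict:
  "W \<subseteq> carrier G \<Longrightarrow> endo_zero (G\<lparr>carrier := W\<rparr>) = restrict (endo_zero G) W"
  by (auto simp: endo_zero_def restrict_def fun_eq_iff)

lemma endo_one_restrict:
  "W \<subseteq> carrier G \<Longrightarrow> endo_one (G\<lparr>carrier := W\<rparr>) = restrict (endo_one G) W"
  by (auto simp: endo_one_def restrict_def fun_eq_iff)

lemma (in group) endo_neg_restrict:
  "subgroup W G \<Longrightarrow> endo_neg (G\<lparr>carrier := W\<rparr>) = restrict (endo_neg G) W"
  using subgroup.subset[of W G] by (auto simp: endo_neg_def restrict_def fun_eq_iff m_inv_consistent)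

context f_group
begin

lemma restrict_F_hom:
  assumes W: "subgroup W G" "\<forall>\<alpha>\<in>F. \<alpha> ` W \<subseteq> W"
  shows "restrict_F W F \<subseteq> hom (G\<lparr>carrier := W\<rparr>) (G\<lparr>carrier := W\<rparr>) \<inter> extensional W"
proof
  fix a assume "a \<in> restrict_F W F"
  then obtain \<alpha> where \<alpha>: "\<alpha> \<in> F" "a = restrict \<alpha> W"
    by (auto simp: restrict_F_def)
  have "a (x \<otimes> y) = a x \<otimes> a y" if "x \<in> W" "y \<in> W" for x y
    using that \<alpha> subgroup.m_closed[OF W(1)] subgroup.mem_carrier[OF W(1)] by (simp add: F_mult)
  then show "a \<in> hom (G\<lparr>carrier := W\<rparr>) (G\<lparr>carrier := W\<rparr>) \<inter> extensional W"
    using \<alpha> W(2) by (auto simp: hom_def image_subset_iff)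
qed

lemma compose_restrict:
  assumes "\<forall>\<alpha>\<in>F. \<alpha> ` W \<subseteq> W" "W \<subseteq> carrier G" "\<alpha> \<in> F" "\<beta> \<in> F"
  shows "compose W (restrict \<alpha> W) (restrict \<beta> W) = restrict (compose (carrier G) \<alpha> \<beta>) W"
  using assms unfolding compose_def by (intro restrict_ext) auto

lemma fgroup_restrict:
  assumes W: "subgroup W G" "\<forall>\<alpha>\<in>F. \<alpha> ` W \<subseteq> W"
    and nontrivial: "x\<^sub>0 \<in> W" "x\<^sub>0 \<noteq> \<one>"
  shows "fgroup (G\<lparr>carrier := W\<rparr>) (restrict_F W F)"
proof -
  let ?H = "G\<lparr>carrier := W\<rparr>"
  have W_carrier: "W \<subseteq> carrier G"
    using subgroup.subset[OF W(1)] .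
  show ?thesis
  proof (rule fgroupI)
    show "group ?H"
      using subgroup_imp_group[OF W(1)] .
    show "restrict_F W F \<subseteq> hom ?H ?H \<inter> extensional (carrier ?H)"
      using restrict_F_hom[OF W] by simp
    show "endo_zero ?H \<in> restrict_F W F" "endo_one ?H \<in> restrict_F W F" "endo_neg ?H \<in> restrict_F W F"
      using zero_in_F one_in_F neg_in_F W W_carrier
      by (auto simp: restrict_F_def endo_zero_restrict endo_one_restrict endo_neg_restrict)
    show "x\<^sub>0 \<in> carrier ?H" "x\<^sub>0 \<noteq> \<one>\<^bsub>?H\<^esub>"
      using nontrivial by auto
  next
    fix a b assume "a \<in> restrict_F W F" "b \<in> restrict_F W F"
    then show "compose (carrier ?H) a b \<in> restrict_F W F"
      using compose_restrict[OF W(2) W_carrier] compose_in_F by (auto simp: restrict_F_def)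
  next
    fix a assume a: "a \<in> restrict_F W F" "a \<noteq> endo_zero ?H"
    then obtain \<alpha> where \<alpha>: "\<alpha> \<in> F" "a = restrict \<alpha> W" "\<alpha> \<noteq> endo_zero G"
      using W_carrier by (auto simp: restrict_F_def endo_zero_restrict)
    then obtain \<beta> where \<beta>: "\<beta> \<in> F" "compose (carrier G) \<alpha> \<beta> = endo_one G"
      "compose (carrier G) \<beta> \<alpha> = endo_one G"
      using inverse_in_F by blast
    show "\<exists>b\<in>restrict_F W F. compose (carrier ?H) a b = endo_one ?H \<and> compose (carrier ?H) b a = endo_one ?H"
    proof
      show "restrict \<beta> W \<in> restrict_F W F"
        using \<beta>(1) by (simp add: restrict_F_def)
      show "compose (carrier ?H) a (restrict \<beta> W) = endo_one ?H \<and> compose (carrier ?H) (restrict \<beta> W) a = endo_one ?H"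
        using \<alpha> \<beta> compose_restrict[OF W(2) W_carrier] by (simp add: endo_one_restrict[OF W_carrier])
    qed
  next
    show "\<forall>a\<in>restrict_F W F. \<forall>b\<in>restrict_F W F. \<forall>x\<in>carrier ?H. a x = b x \<longrightarrow> a = b \<or> x = \<one>\<^bsub>?H\<^esub>"
    proof (intro ballI impI)
      fix a b x assume "a \<in> restrict_F W F" "b \<in> restrict_F W F" "x \<in> carrier ?H" "a x = b x"
      then obtain \<alpha> \<beta> where "\<alpha> \<in> F" "\<beta> \<in> F" "a = restrict \<alpha> W" "b = restrict \<beta> W"
        "x \<in> W" "\<alpha> x = \<beta> x"
        by (auto simp: restrict_F_def)
      then show "a = b \<or> x = \<one>\<^bsub>?H\<^esub>"
        using F_eq_apply W_carrier by auto
    qed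
  qed
qed

end

section \<open>The block of a quasi-kernel element\<close>

lemma (in comm_group) div_eq_div_of_mult_eq:
  assumes "a \<in> carrier G" "b \<in> carrier G" "c \<in> carrier G" "d \<in> carrier G" "a \<otimes> b = c \<otimes> d"
  shows "a \<otimes> inv c = d \<otimes> inv b"
proof -
  have "a = (a \<otimes> b) \<otimes> inv b"
    using assms(1,2) by (simp add: m_assoc)
  also have "\<dots> = (d \<otimes> inv b) \<otimes> c"
    using assms by (simp add: m_ac)
  finally show ?thesis
    using assms(1-4) by (simp add: inv_solve_right')
qed

text \<open>For \<open>u\<close> in the quasi-kernel this is the \<open>\<gamma> \<in> F\<close> with \<open>\<alpha> u + \<beta> u = \<gamma> u\<close>,
  unique if \<open>u \<noteq> 0\<close>; for other \<open>u\<close> it is unspecified.\<close>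

definition add_at :: "('v, 'b) monoid_scheme \<Rightarrow> ('v \<Rightarrow> 'v) set \<Rightarrow> 'v \<Rightarrow> ('v \<Rightarrow> 'v) \<Rightarrow> ('v \<Rightarrow> 'v) \<Rightarrow> ('v \<Rightarrow> 'v)"
  where "add_at G F u \<alpha> \<beta> = (SOME \<gamma>. \<gamma> \<in> F \<and> \<alpha> u \<otimes>\<^bsub>G\<^esub> \<beta> u = \<gamma> u)"

definition block_of :: "('v, 'b) monoid_scheme \<Rightarrow> ('v \<Rightarrow> 'v) set \<Rightarrow> 'v \<Rightarrow> 'v set"
  where "block_of G F u =
    {w \<in> carrier G. \<forall>\<alpha>\<in>F. \<forall>\<beta>\<in>F. \<alpha> w \<otimes>\<^bsub>G\<^esub> \<beta> w = add_at G F u \<alpha> \<beta> w}"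

lemma block_of_subset_carrier: "block_of G F u \<subseteq> carrier G"
  by (auto simp: block_of_def)

locale commutative_f_group = f_group +
  assumes commutative: "commutative_F G F"
begin

abbreviation Q :: "'a set"
  where "Q \<equiv> qkernel G F"

lemma qkernel_carrier: "x \<in> Q \<Longrightarrow> x \<in> carrier G"
  by (simp add: qkernel_def)

lemma F_commute: "\<alpha> \<in> F \<Longrightarrow> \<beta> \<in> F \<Longrightarrow> x \<in> carrier G \<Longrightarrow> \<alpha> (\<beta> x) = \<beta> (\<alpha> x)"
  using commutative by (auto simp: commutative_F_def)

lemma F_mult_commute:
  "\<alpha> \<in> F \<Longrightarrow> \<beta> \<in> F \<Longrightarrow> \<delta> \<in> F \<Longrightarrow> x \<in> carrier G \<Longrightarrow> \<delta> (\<alpha> x \<otimes> \<beta> x) = \<alpha> (\<delta> x) \<otimes> \<beta> (\<delta> x)"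
  by (simp add: F_mult F_commute)

lemma add_at_in_F: "u \<in> Q \<Longrightarrow> \<alpha> \<in> F \<Longrightarrow> \<beta> \<in> F \<Longrightarrow> add_at G F u \<alpha> \<beta> \<in> F"
  and add_at_apply: "u \<in> Q \<Longrightarrow> \<alpha> \<in> F \<Longrightarrow> \<beta> \<in> F \<Longrightarrow> \<alpha> u \<otimes> \<beta> u = add_at G F u \<alpha> \<beta> u"
proof -
  assume "u \<in> Q" "\<alpha> \<in> F" "\<beta> \<in> F"
  then have "\<exists>\<gamma>. \<gamma> \<in> F \<and> \<alpha> u \<otimes> \<beta> u = \<gamma> u"
    by (auto simp: qkernel_def)
  then have "add_at G F u \<alpha> \<beta> \<in> F \<and> \<alpha> u \<otimes> \<beta> u = add_at G F u \<alpha> \<beta> u"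
    unfolding add_at_def by (rule someI_ex)
  then show "add_at G F u \<alpha> \<beta> \<in> F" "\<alpha> u \<otimes> \<beta> u = add_at G F u \<alpha> \<beta> u"
    by auto
qed

lemma block_of_subset_qkernel: "u \<in> Q \<Longrightarrow> block_of G F u \<subseteq> Q"
  using add_at_in_F unfolding block_of_def qkernel_def by blast

lemma self_in_block_of: "u \<in> Q \<Longrightarrow> u \<in> block_of G F u"
  using add_at_apply qkernel_carrier unfolding block_of_def by blast

lemma subgroup_block_of:
  assumes u: "u \<in> Q"
  shows "subgroup (block_of G F u) G"
proof (rule subgroup.intro)
  show "block_of G F u \<subseteq> carrier G"
    by (rule block_of_subset_carrier)
  show "\<one> \<in> block_of G F u"
    unfolding block_of_def using add_at_in_F[OF u] by auto
next
  fix x y assume x: "x \<in> block_of G F u" and y: "y \<in> block_of G F u"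
  have "\<alpha> (x \<otimes> y) \<otimes> \<beta> (x \<otimes> y) = add_at G F u \<alpha> \<beta> (x \<otimes> y)" if "\<alpha> \<in> F" "\<beta> \<in> F" for \<alpha> \<beta>
  proof -
    have "x \<in> carrier G" "y \<in> carrier G"
      using x y by (auto simp: block_of_def)
    then have "\<alpha> (x \<otimes> y) \<otimes> \<beta> (x \<otimes> y) = (\<alpha> x \<otimes> \<beta> x) \<otimes> (\<alpha> y \<otimes> \<beta> y)"
      using that by (simp add: F_mult m_ac)
    also have "\<dots> = add_at G F u \<alpha> \<beta> (x \<otimes> y)"
      using that x y add_at_in_F[OF u that] by (simp add: block_of_def F_mult)
    finally show ?thesis .
  qed
  then show "x \<otimes> y \<in> block_of G F u"
    using x y by (simp add: block_of_def)
next
  fix x assume x: "x \<in> block_of G F u"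
  have "\<alpha> (inv x) \<otimes> \<beta> (inv x) = add_at G F u \<alpha> \<beta> (inv x)" if "\<alpha> \<in> F" "\<beta> \<in> F" for \<alpha> \<beta>
  proof -
    have "x \<in> carrier G"
      using x by (simp add: block_of_def)
    then have "\<alpha> (inv x) \<otimes> \<beta> (inv x) = inv (\<alpha> x \<otimes> \<beta> x)"
      using that by (simp add: F_inv inv_mult)
    also have "\<dots> = add_at G F u \<alpha> \<beta> (inv x)"
      using that x add_at_in_F[OF u that] by (simp add: block_of_def F_inv)
    finally show ?thesis .
  qed
  then show "inv x \<in> block_of G F u"
    using x by (simp add: block_of_def)
qed

lemma block_of_invariant:
  assumes "u \<in> Q" "\<delta> \<in> F" "w \<in> block_of G F u"
  shows "\<delta> w \<in> block_of G F u"
proof -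
  have "\<alpha> (\<delta> w) \<otimes> \<beta> (\<delta> w) = add_at G F u \<alpha> \<beta> (\<delta> w)" if "\<alpha> \<in> F" "\<beta> \<in> F" for \<alpha> \<beta>
    using assms that add_at_in_F[OF assms(1) that]
    by (simp add: block_of_def F_mult_commute[symmetric] F_commute)
  then show ?thesis
    using assms by (simp add: block_of_def)
qed

lemma qkernel_scale: "u \<in> Q \<Longrightarrow> \<delta> \<in> F \<Longrightarrow> \<delta> u \<in> Q"
  using block_of_invariant self_in_block_of block_of_subset_qkernel by blast

lemma qkernel_diff:
  assumes "x \<in> Q" "\<alpha> \<in> F" "\<beta> \<in> F"
  obtains \<delta> where "\<delta> \<in> F" "\<delta> x = \<alpha> x \<otimes> inv (\<beta> x)"
proof -
  obtain \<nu> where \<nu>: "\<nu> \<in> F" "\<forall>y\<in>carrier G. \<nu> y = inv (\<beta> y)"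
    using negation_in_F[OF assms(3)] by blast
  then show ?thesis
    using assms qkernel_carrier[OF assms(1)] that by (force simp: qkernel_def)
qed

text \<open>The two sides of \<open>\<gamma>\<^sub>q q - \<gamma>\<^sub>w q = \<gamma>\<^sub>w v - \<gamma> v\<close> are values \<open>\<delta> q = \<epsilon> v\<close> of
  elements of \<open>F\<close>. If they vanish, \<open>\<gamma>\<^sub>w = \<gamma>\<close> by fixed-point-freeness at \<open>v\<close>;
  otherwise \<open>\<delta> \<noteq> 0\<close>, and applying \<open>\<delta>\<close> moves the identity for \<open>v\<close> over to \<open>q\<close>.\<close>

lemma add_at_transfer:
  assumes q: "q \<in> Q" and v: "v \<in> Q" "v \<noteq> \<one>" and qv: "q \<otimes> v \<in> Q"
    and F: "\<alpha> \<in> F" "\<beta> \<in> F" "\<gamma> \<in> F" and \<gamma>v: "\<alpha> v \<otimes> \<beta> v = \<gamma> v"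
  shows "\<alpha> q \<otimes> \<beta> q = \<gamma> q"
proof -
  have qc: "q \<in> carrier G" and vc: "v \<in> carrier G"
    using q v qkernel_carrier by auto
  obtain \<gamma>\<^sub>q where \<gamma>\<^sub>q: "\<gamma>\<^sub>q \<in> F" "\<alpha> q \<otimes> \<beta> q = \<gamma>\<^sub>q q"
    using q F by (auto simp: qkernel_def)
  obtain \<gamma>\<^sub>w where \<gamma>\<^sub>w: "\<gamma>\<^sub>w \<in> F" "\<alpha> (q \<otimes> v) \<otimes> \<beta> (q \<otimes> v) = \<gamma>\<^sub>w (q \<otimes> v)"
    using qv F by (auto simp: qkernel_def)
  have "\<gamma>\<^sub>q q \<otimes> \<gamma> v = (\<alpha> q \<otimes> \<beta> q) \<otimes> (\<alpha> v \<otimes> \<beta> v)"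
    using \<gamma>\<^sub>q(2) \<gamma>v by simp
  also have "\<dots> = (\<alpha> q \<otimes> \<alpha> v) \<otimes> (\<beta> q \<otimes> \<beta> v)"
    using F qc vc by (simp add: m_ac)
  also have "\<dots> = \<gamma>\<^sub>w q \<otimes> \<gamma>\<^sub>w v"
    using \<gamma>\<^sub>w F qc vc by (simp add: F_mult)
  finally have "\<gamma>\<^sub>q q \<otimes> inv (\<gamma>\<^sub>w q) = \<gamma>\<^sub>w v \<otimes> inv (\<gamma> v)"
    using \<gamma>\<^sub>q \<gamma>\<^sub>w F qc vc by (intro div_eq_div_of_mult_eq) auto
  moreover obtain \<delta> where \<delta>: "\<delta> \<in> F" "\<delta> q = \<gamma>\<^sub>q q \<otimes> inv (\<gamma>\<^sub>w q)"
    using qkernel_diff[OF q \<gamma>\<^sub>q(1) \<gamma>\<^sub>w(1)] .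
  moreover obtain \<epsilon> where \<epsilon>: "\<epsilon> \<in> F" "\<epsilon> v = \<gamma>\<^sub>w v \<otimes> inv (\<gamma> v)"
    using qkernel_diff[OF v(1) \<gamma>\<^sub>w(1) F(3)] .
  ultimately have \<delta>\<epsilon>: "\<delta> q = \<epsilon> v"
    by simp
  show ?thesis
  proof (cases "\<delta> q = \<one>")
    case True
    then have "\<gamma>\<^sub>q q = \<gamma>\<^sub>w q" "\<gamma>\<^sub>w v = \<gamma> v"
      using \<delta> \<epsilon> \<delta>\<epsilon> \<gamma>\<^sub>q \<gamma>\<^sub>w F qc vc by (simp_all add: inv_solve_right')
    moreover have "\<gamma>\<^sub>w = \<gamma>"
      using F_eq_apply[OF \<gamma>\<^sub>w(1) F(3) vc] \<open>\<gamma>\<^sub>w v = \<gamma> v\<close> v(2) by simp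
    ultimately show ?thesis
      using \<gamma>\<^sub>q by simp
  next
    case False
    then have \<delta>_nonzero: "\<delta> \<noteq> endo_zero G"
      using qc by auto
    have "\<delta> (\<alpha> q \<otimes> \<beta> q) = \<alpha> (\<epsilon> v) \<otimes> \<beta> (\<epsilon> v)"
      using \<delta> F qc by (simp add: F_mult_commute \<delta>\<epsilon>)
    also have "\<dots> = \<epsilon> (\<gamma> v)"
      using \<epsilon> F vc by (simp add: F_mult_commute \<gamma>v[symmetric])
    also have "\<dots> = \<gamma> (\<delta> q)"
      using F_commute[OF \<epsilon>(1) F(3) vc] \<delta>\<epsilon> by simp
    also have "\<dots> = \<delta> (\<gamma> q)"
      using F_commute[OF \<delta>(1) F(3) qc] by simp
    finally show ?thesis
      by (rule F_inj[OF \<delta>(1) \<delta>_nonzero, rotated 2]) (use F qc in simp_all)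
  qed
qed

lemma mem_block_ofI:
  assumes q: "q \<in> Q" and u: "u \<in> Q" "u \<noteq> \<one>"
    and l: "l \<in> F" "l \<noteq> endo_zero G" and compatible: "q \<otimes> l u \<in> Q"
  shows "q \<in> block_of G F u"
proof -
  have lu: "l u \<in> block_of G F u"
    using block_of_invariant[OF u(1) l(1) self_in_block_of[OF u(1)]] .
  have "l u \<noteq> \<one>"
    using l u qkernel_carrier by (simp add: F_apply_eq_one_iff)
  have "\<alpha> q \<otimes> \<beta> q = add_at G F u \<alpha> \<beta> q" if \<alpha>\<beta>: "\<alpha> \<in> F" "\<beta> \<in> F" for \<alpha> \<beta>
  proof (rule add_at_transfer[OF q _ \<open>l u \<noteq> \<one>\<close> compatible \<alpha>\<beta>])
    show "l u \<in> Q"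
      using qkernel_scale[OF u(1) l(1)] .
    show "add_at G F u \<alpha> \<beta> \<in> F"
      using add_at_in_F[OF u(1) \<alpha>\<beta>] .
    show "\<alpha> (l u) \<otimes> \<beta> (l u) = add_at G F u \<alpha> \<beta> (l u)"
      using lu \<alpha>\<beta> unfolding block_of_def by blast
  qed
  then show ?thesis
    using q qkernel_carrier by (simp add: block_of_def)
qed

lemma block_of_regular:
  assumes u: "u \<in> Q" "u \<noteq> \<one>"
  shows "regular_subspace G F (block_of G F u)"
proof -
  define S where "S = block_of G F u"
  let ?H = "G\<lparr>carrier := S\<rparr>" and ?F = "restrict_F S F"
  have S: "subgroup S G" "\<forall>\<alpha>\<in>F. \<alpha> ` S \<subseteq> S"
    unfolding S_def using subgroup_block_of[OF u(1)] block_of_invariant[OF u(1)] by auto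
  have S_carrier: "S \<subseteq> carrier G"
    using subgroup.subset[OF S(1)] .
  have qkernel_H: "qkernel ?H ?F = S"
    using qkernel_restrict[OF S_carrier] block_of_subset_qkernel[OF u(1)] by (auto simp: S_def)
  have "fgroup ?H ?F"
    using fgroup_restrict[OF S] self_in_block_of[OF u(1)] u(2) by (simp add: S_def)
  moreover have "generate ?H (qkernel ?H ?F) = carrier ?H"
    using group.generate_incl[OF subgroup_imp_group[OF S(1)]] generate.incl[of _ S ?H]
    by (auto simp: qkernel_H)
  moreover have "compatible ?H ?F x y" if "x \<in> S" "y \<in> S" "y \<noteq> \<one>" for x y
  proof -
    have "restrict (endo_one G) S \<in> ?F"
      using one_in_F by (simp add: restrict_F_def)
    moreover have "restrict (endo_one G) S y \<noteq> endo_zero ?H y"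
      using that S_carrier by (auto simp: endo_one_def endo_zero_def)
    moreover have "x \<otimes>\<^bsub>?H\<^esub> restrict (endo_one G) S y \<in> qkernel ?H ?F"
      using that S_carrier subgroup.m_closed[OF S(1)] by (auto simp: qkernel_H endo_one_def)
    ultimately show ?thesis
      unfolding compatible_def by fastforce
  qed
  ultimately have "regular_nvs ?H ?F"
    unfolding regular_nvs_def near_vector_space_def by (simp add: qkernel_H)
  then show ?thesis
    using S unfolding regular_subspace_def S_def by blast
qed

lemma block_of_maximal:
  assumes u: "u \<in> Q" "u \<noteq> \<one>"
    and W: "regular_subspace G F W" "block_of G F u \<subseteq> W"
  shows "W = block_of G F u"
proof -
  let ?H = "G\<lparr>carrier := W\<rparr>" and ?F = "restrict_F W F"
  have W_subgroup: "subgroup W G" and "\<forall>\<alpha>\<in>F. \<alpha> ` W \<subseteq> W"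
    and regular: "regular_nvs ?H ?F"
    using W(1) by (auto simp: regular_subspace_def)
  have W_carrier: "W \<subseteq> carrier G"
    using subgroup.subset[OF W_subgroup] .
  have qkernel_H: "qkernel ?H ?F = W \<inter> Q"
    using qkernel_restrict[OF W_carrier] .
  have uW: "u \<in> W"
    using W(2) self_in_block_of[OF u(1)] by blast
  have "q \<in> block_of G F u" if q: "q \<in> W \<inter> Q" for q
  proof (cases "q = \<one>")
    case True
    then show ?thesis
      using subgroup.one_closed[OF subgroup_block_of[OF u(1)]] by simp
  next
    case False
    then have "compatible ?H ?F q u"
      using regular q uW u unfolding regular_nvs_def qkernel_H by auto
    then obtain l' where "l' \<in> ?F" "l' \<noteq> endo_zero ?H" "q \<otimes> l' u \<in> W \<inter> Q"
      unfolding compatible_def qkernel_H by auto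
    then obtain l where l: "l \<in> F" "restrict l W \<noteq> endo_zero ?H" "q \<otimes> restrict l W u \<in> W \<inter> Q"
      by (auto simp: restrict_F_def)
    then have "l \<noteq> endo_zero G" "q \<otimes> l u \<in> Q"
      using uW by (auto simp: endo_zero_restrict[OF W_carrier])
    then show ?thesis
      using mem_block_ofI[OF _ u l(1)] q by blast
  qed
  then have "generate G (W \<inter> Q) \<subseteq> block_of G F u"
    using generate_subgroup_incl[OF _ subgroup_block_of[OF u(1)]] by blast
  moreover have "generate ?H (W \<inter> Q) = W"
    using regular unfolding regular_nvs_def near_vector_space_def qkernel_H by simp
  ultimately have "W \<subseteq> block_of G F u"
    using generate_consistent[OF _ W_subgroup] by auto
  then show ?thesis
    using W(2) by blast
qed

lemma block_of_in_blocks: "u \<in> Q \<Longrightarrow> u \<noteq> \<one> \<Longrightarrow> block_of G F u \<in> blocks G F"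
  unfolding blocks_def using block_of_regular block_of_maximal by blast

end

section \<open>Reduced powers\<close>

definition up_set :: "('v, 'b) monoid_scheme \<Rightarrow> 'i filter \<Rightarrow> 'v set \<Rightarrow> ('i \<Rightarrow> 'v) set set"
  where "up_set G U H = up_class G U ` (UNIV \<rightarrow> H)"

locale reduced_power = group G for G (structure) +
  fixes U :: "'i filter"
  assumes proper: "U \<noteq> bot"
begin

abbreviation Seq :: "('i \<Rightarrow> 'a) set"
  where "Seq \<equiv> UNIV \<rightarrow> carrier G"

abbreviation cls :: "('i \<Rightarrow> 'a) \<Rightarrow> ('i \<Rightarrow> 'a) set"
  where "cls \<equiv> up_class G U"

abbreviation P :: "('i \<Rightarrow> 'a) set monoid"
  where "P \<equiv> ultrapower G U"

lemma up_class_self: "f \<in> Seq \<Longrightarrow> f \<in> cls f"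
  by (simp add: up_class_def)

lemma up_class_eq_iff:
  assumes "f \<in> Seq" "g \<in> Seq"
  shows "cls f = cls g \<longleftrightarrow> eventually (\<lambda>i. f i = g i) U"
proof
  assume "cls f = cls g"
  then have "g \<in> cls f"
    using up_class_self[OF assms(2)] by simp
  then show "eventually (\<lambda>i. f i = g i) U"
    by (simp add: up_class_def)
next
  assume fg: "eventually (\<lambda>i. f i = g i) U"
  have "eventually (\<lambda>i. f i = h i) U \<longleftrightarrow> eventually (\<lambda>i. g i = h i) U" for h
  proof
    assume "eventually (\<lambda>i. f i = h i) U"
    with fg show "eventually (\<lambda>i. g i = h i) U"
      by eventually_elim simp
  next
    assume "eventually (\<lambda>i. g i = h i) U"
    with fg show "eventually (\<lambda>i. f i = h i) U"
      by eventually_elim simp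
  qed
  then show "cls f = cls g"
    by (simp add: up_class_def)
qed

lemma up_class_cong: "f \<in> Seq \<Longrightarrow> g \<in> Seq \<Longrightarrow> (\<And>i. f i = g i) \<Longrightarrow> cls f = cls g"
  using up_class_eq_iff by auto

lemma carrier_ultrapower: "carrier P = cls ` Seq"
  by (simp add: ultrapower_def up_carrier_def)

lemma ultrapower_carrierE:
  assumes "A \<in> carrier P"
  obtains f where "f \<in> Seq" "A = cls f"
  using assms carrier_ultrapower by auto

lemma up_class_in_carrier: "f \<in> Seq \<Longrightarrow> cls f \<in> carrier P"
  by (simp add: carrier_ultrapower)

lemma one_ultrapower: "\<one>\<^bsub>P\<^esub> = cls (\<lambda>_. \<one>)"
  by (simp add: ultrapower_def)

lemma mult_ultrapower:
  assumes "f \<in> Seq" "g \<in> Seq"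
  shows "cls f \<otimes>\<^bsub>P\<^esub> cls g = cls (\<lambda>i. f i \<otimes> g i)"
proof -
  have "h \<in> up_mult G U (cls f) (cls g) \<longleftrightarrow> h \<in> cls (\<lambda>i. f i \<otimes> g i)" for h
  proof
    assume "h \<in> up_mult G U (cls f) (cls g)"
    then obtain f' g' where h: "h \<in> Seq" "f' \<in> cls f" "g' \<in> cls g"
      "eventually (\<lambda>i. h i = f' i \<otimes> g' i) U"
      by (auto simp: up_mult_def)
    have "eventually (\<lambda>i. f i = f' i) U" "eventually (\<lambda>i. g i = g' i) U"
      using h by (auto simp: up_class_def)
    then have "eventually (\<lambda>i. f i \<otimes> g i = h i) U"
      using h(4) by eventually_elim simp
    then show "h \<in> cls (\<lambda>i. f i \<otimes> g i)"
      using h(1) by (simp add: up_class_def)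
  next
    assume "h \<in> cls (\<lambda>i. f i \<otimes> g i)"
    then have "h \<in> Seq" "eventually (\<lambda>i. h i = f i \<otimes> g i) U"
      by (auto simp: up_class_def elim: eventually_mono)
    then show "h \<in> up_mult G U (cls f) (cls g)"
      unfolding up_mult_def using up_class_self assms by blast
  qed
  then show ?thesis
    by (auto simp: ultrapower_def)
qed

lemma group_ultrapower: "group P"
proof (rule groupI)
  fix A B assume "A \<in> carrier P" "B \<in> carrier P"
  then show "A \<otimes>\<^bsub>P\<^esub> B \<in> carrier P"
    by (elim ultrapower_carrierE) (simp add: mult_ultrapower up_class_in_carrier Pi_iff)
next
  show "\<one>\<^bsub>P\<^esub> \<in> carrier P"
    by (simp add: one_ultrapower up_class_in_carrier)
next
  fix A B C assume "A \<in> carrier P" "B \<in> carrier P" "C \<in> carrier P"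
  then show "A \<otimes>\<^bsub>P\<^esub> B \<otimes>\<^bsub>P\<^esub> C = A \<otimes>\<^bsub>P\<^esub> (B \<otimes>\<^bsub>P\<^esub> C)"
    by (elim ultrapower_carrierE) (simp add: mult_ultrapower Pi_iff m_assoc)
next
  fix A assume "A \<in> carrier P"
  then show "\<one>\<^bsub>P\<^esub> \<otimes>\<^bsub>P\<^esub> A = A"
    by (elim ultrapower_carrierE) (simp add: one_ultrapower mult_ultrapower Pi_iff)
next
  fix A assume "A \<in> carrier P"
  then obtain f where f: "f \<in> Seq" "A = cls f"
    by (elim ultrapower_carrierE)
  then have "cls (\<lambda>i. inv (f i)) \<in> carrier P" "cls (\<lambda>i. inv (f i)) \<otimes>\<^bsub>P\<^esub> A = \<one>\<^bsub>P\<^esub>"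
    by (simp_all add: one_ultrapower mult_ultrapower Pi_iff up_class_in_carrier)
  then show "\<exists>B\<in>carrier P. B \<otimes>\<^bsub>P\<^esub> A = \<one>\<^bsub>P\<^esub>"
    by blast
qed

lemma inv_ultrapower: "f \<in> Seq \<Longrightarrow> inv\<^bsub>P\<^esub> (cls f) = cls (\<lambda>i. inv (f i))"
  by (intro group.inv_equality[OF group_ultrapower])
    (simp_all add: one_ultrapower mult_ultrapower Pi_iff up_class_in_carrier)

lemma up_act_up_class:
  assumes "f \<in> Seq" "\<alpha> \<in> carrier G \<rightarrow> carrier G"
  shows "up_act G U \<alpha> (cls f) = cls (\<lambda>i. \<alpha> (f i))"
proof -
  have "h \<in> cls (\<lambda>i. \<alpha> (f i)) \<longleftrightarrow> h \<in> Seq \<and> (\<exists>f'\<in>cls f. eventually (\<lambda>i. h i = \<alpha> (f' i)) U)"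
    for h
  proof
    assume "h \<in> cls (\<lambda>i. \<alpha> (f i))"
    then have "h \<in> Seq" "eventually (\<lambda>i. h i = \<alpha> (f i)) U"
      by (auto simp: up_class_def elim: eventually_mono)
    then show "h \<in> Seq \<and> (\<exists>f'\<in>cls f. eventually (\<lambda>i. h i = \<alpha> (f' i)) U)"
      using up_class_self[OF assms(1)] by blast
  next
    assume "h \<in> Seq \<and> (\<exists>f'\<in>cls f. eventually (\<lambda>i. h i = \<alpha> (f' i)) U)"
    then obtain f' where "h \<in> Seq" "eventually (\<lambda>i. f i = f' i) U"
      "eventually (\<lambda>i. h i = \<alpha> (f' i)) U"
      by (auto simp: up_class_def)
    then show "h \<in> cls (\<lambda>i. \<alpha> (f i))"
      unfolding up_class_def by (auto elim: eventually_elim2)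
  qed
  then show ?thesis
    using up_class_in_carrier[OF assms(1)] by (auto simp: up_act_def ultrapower_def)
qed

lemma up_act_extensional: "up_act G U \<alpha> \<in> extensional (carrier P)"
  by (simp add: up_act_def ultrapower_def)

lemma ultrapower_map_eqI:
  assumes "a \<in> extensional (carrier P)" "b \<in> extensional (carrier P)"
    and "\<And>f. f \<in> Seq \<Longrightarrow> a (cls f) = b (cls f)"
  shows "a = b"
  using assms by (intro extensionalityI[of _ "carrier P"]) (auto simp: carrier_ultrapower)

lemma up_set_carrier: "up_set G U (carrier G) = carrier P"
  by (simp add: up_set_def carrier_ultrapower)

lemma up_set_mono: "H \<subseteq> K \<Longrightarrow> up_set G U H \<subseteq> up_set G U K"
  unfolding up_set_def by (auto intro!: image_mono)

lemma up_set_one: "up_set G U {\<one>} = {\<one>\<^bsub>P\<^esub>}"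
proof -
  have "(UNIV :: 'i set) \<rightarrow> {\<one>} = {\<lambda>_. \<one>}"
    by auto
  then show ?thesis
    unfolding up_set_def one_ultrapower by simp
qed

lemma up_set_set_mult:
  assumes "H \<subseteq> carrier G" "K \<subseteq> carrier G"
  shows "up_set G U (H <#> K) \<subseteq> up_set G U H <#>\<^bsub>P\<^esub> up_set G U K"
proof
  fix A assume "A \<in> up_set G U (H <#> K)"
  then obtain f where f: "f \<in> UNIV \<rightarrow> H <#> K" "A = cls f"
    by (auto simp: up_set_def)
  have "\<forall>i. \<exists>hk. fst hk \<in> H \<and> snd hk \<in> K \<and> f i = fst hk \<otimes> snd hk"
    using f(1) by (fastforce simp: set_mult_def)
  then obtain hk where hk: "\<And>i. fst (hk i) \<in> H" "\<And>i. snd (hk i) \<in> K"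
    "\<And>i. f i = fst (hk i) \<otimes> snd (hk i)"
    by metis
  define h k where "h = (\<lambda>i. fst (hk i))" and "k = (\<lambda>i. snd (hk i))"
  have hk_seq: "h \<in> UNIV \<rightarrow> H" "k \<in> UNIV \<rightarrow> K"
    using hk by (auto simp: h_def k_def)
  have "h \<in> Seq" "k \<in> Seq"
    using hk(1,2) assms by (auto simp: h_def k_def)
  moreover have "f = (\<lambda>i. h i \<otimes> k i)"
    using hk(3) by (simp add: h_def k_def fun_eq_iff)
  ultimately have "A = cls h \<otimes>\<^bsub>P\<^esub> cls k"
    using f(2) by (simp add: mult_ultrapower)
  with hk_seq show "A \<in> up_set G U H <#>\<^bsub>P\<^esub> up_set G U K"
    unfolding up_set_def set_mult_def by blast
qed


lemma Seq_apply [simp]: "f \<in> Seq \<Longrightarrow> f i \<in> carrier G"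
  by auto

lemma up_act_unique:
  assumes "\<alpha> \<in> carrier G \<rightarrow> carrier G" "\<phi> \<in> extensional (carrier P)"
    and "\<And>f. f \<in> Seq \<Longrightarrow> \<phi> (cls f) = cls (\<lambda>i. \<alpha> (f i))"
  shows "\<phi> = up_act G U \<alpha>"
  using assms up_act_up_class by (intro ultrapower_map_eqI up_act_extensional) auto

end

locale f_group_reduced_power = f_group G F + reduced_power G U
  for G (structure) and F and U
begin

lemma F_comp_Seq [simp]: "\<alpha> \<in> F \<Longrightarrow> f \<in> Seq \<Longrightarrow> (\<lambda>i. \<alpha> (f i)) \<in> Seq"
  by auto

lemma endo_zero_ultrapower: "endo_zero P = up_act G U (endo_zero G)"
  by (rule up_act_unique)
    (auto simp: endo_zero_def one_ultrapower up_class_in_carrier intro: up_class_cong)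

lemma endo_one_ultrapower: "endo_one P = up_act G U (endo_one G)"
  by (rule up_act_unique)
    (auto simp: endo_one_def up_class_in_carrier intro: up_class_cong)

lemma endo_neg_ultrapower: "endo_neg P = up_act G U (endo_neg G)"
  by (rule up_act_unique)
    (auto simp: endo_neg_def inv_ultrapower up_class_in_carrier intro: up_class_cong)

lemma compose_up_act:
  assumes "\<alpha> \<in> F" "\<beta> \<in> F"
  shows "compose (carrier P) (up_act G U \<alpha>) (up_act G U \<beta>) = up_act G U (compose (carrier G) \<alpha> \<beta>)"
proof (rule up_act_unique)
  show "compose (carrier G) \<alpha> \<beta> \<in> carrier G \<rightarrow> carrier G"
    using compose_in_F[OF assms] by simp
  show "compose (carrier P) (up_act G U \<alpha>) (up_act G U \<beta>) \<in> extensional (carrier P)"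
    by (simp add: compose_def)
  fix f assume f: "f \<in> Seq"
  then have "(\<lambda>i. \<beta> (f i)) \<in> Seq"
    using assms by auto
  then show "compose (carrier P) (up_act G U \<alpha>) (up_act G U \<beta>) (cls f) =
      cls (\<lambda>i. compose (carrier G) \<alpha> \<beta> (f i))"
    using f assms up_class_in_carrier[OF f]
    by (auto simp: compose_eq up_act_up_class intro: up_class_cong)
qed

lemma up_act_hom:
  assumes "\<alpha> \<in> F"
  shows "up_act G U \<alpha> \<in> hom P P"
proof -
  have "up_act G U \<alpha> A \<in> carrier P" if "A \<in> carrier P" for A
    using that assms by (elim ultrapower_carrierE) (auto simp: up_act_up_class up_class_in_carrier)
  moreover have "up_act G U \<alpha> (A \<otimes>\<^bsub>P\<^esub> B) = up_act G U \<alpha> A \<otimes>\<^bsub>P\<^esub> up_act G U \<alpha> B"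
    if "A \<in> carrier P" "B \<in> carrier P" for A B
    using that assms
    by (elim ultrapower_carrierE)
      (auto simp: up_act_up_class mult_ultrapower F_mult intro: up_class_cong)
  ultimately show ?thesis
    by (auto simp: hom_def)
qed

lemma ultrapower_nontrivial: "\<exists>A\<in>carrier P. A \<noteq> \<one>\<^bsub>P\<^esub>"
proof -
  obtain x where x: "x \<in> carrier G" "x \<noteq> \<one>"
    using carrier_nontrivial by blast
  then have "cls (\<lambda>_. x) \<noteq> cls (\<lambda>_. \<one>)"
    using proper by (simp add: up_class_eq_iff)
  then show ?thesis
    using x by (intro bexI[of _ "cls (\<lambda>_. x)"]) (auto simp: one_ultrapower up_class_in_carrier)
qed

lemma up_act_eq_apply:
  assumes "\<alpha> \<in> F" "\<beta> \<in> F" "A \<in> carrier P" "up_act G U \<alpha> A = up_act G U \<beta> A"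
  shows "\<alpha> = \<beta> \<or> A = \<one>\<^bsub>P\<^esub>"
proof (cases "\<alpha> = \<beta>")
  case False
  obtain f where f: "f \<in> Seq" "A = cls f"
    using assms(3) by (elim ultrapower_carrierE)
  then have "eventually (\<lambda>i. \<alpha> (f i) = \<beta> (f i)) U"
    using assms by (simp add: up_act_up_class up_class_eq_iff)
  then have "eventually (\<lambda>i. f i = \<one>) U"
  proof (rule eventually_mono)
    fix i assume "\<alpha> (f i) = \<beta> (f i)"
    then show "f i = \<one>"
      using F_eq_apply[OF assms(1,2)] f(1) False by simp
  qed
  then show ?thesis
    using f by (simp add: one_ultrapower up_class_eq_iff)
qed simp

lemma fgroup_ultrapower: "fgroup P (up_act G U ` F)"
proof -
  obtain A where A: "A \<in> carrier P" "A \<noteq> \<one>\<^bsub>P\<^esub>"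
    using ultrapower_nontrivial by blast
  show ?thesis
  proof (rule fgroupI[OF group_ultrapower _ _ _ _ A])
    show "up_act G U ` F \<subseteq> hom P P \<inter> extensional (carrier P)"
      using up_act_hom up_act_extensional by blast
    show "endo_zero P \<in> up_act G U ` F" "endo_one P \<in> up_act G U ` F" "endo_neg P \<in> up_act G U ` F"
      using endo_zero_ultrapower endo_one_ultrapower endo_neg_ultrapower zero_in_F one_in_F neg_in_F
      by auto
  next
    fix a b assume "a \<in> up_act G U ` F" "b \<in> up_act G U ` F"
    then show "compose (carrier P) a b \<in> up_act G U ` F"
      using compose_up_act compose_in_F by auto
  next
    fix a assume a: "a \<in> up_act G U ` F" "a \<noteq> endo_zero P"
    then obtain \<alpha> where \<alpha>: "\<alpha> \<in> F" "a = up_act G U \<alpha>" "\<alpha> \<noteq> endo_zero G"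
      using endo_zero_ultrapower by auto
    then obtain \<beta> where \<beta>: "\<beta> \<in> F" "compose (carrier G) \<alpha> \<beta> = endo_one G"
      "compose (carrier G) \<beta> \<alpha> = endo_one G"
      using inverse_in_F by blast
    show "\<exists>b\<in>up_act G U ` F. compose (carrier P) a b = endo_one P \<and> compose (carrier P) b a = endo_one P"
    proof
      show "up_act G U \<beta> \<in> up_act G U ` F"
        using \<beta>(1) by simp
      show "compose (carrier P) a (up_act G U \<beta>) = endo_one P \<and> compose (carrier P) (up_act G U \<beta>) a = endo_one P"
        using \<alpha> \<beta> compose_up_act endo_one_ultrapower by simp
    qed
  next
    show "\<forall>a\<in>up_act G U ` F. \<forall>b\<in>up_act G U ` F. \<forall>x\<in>carrier P. a x = b x \<longrightarrow> a = b \<or> x = \<one>\<^bsub>P\<^esub>"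
      using up_act_eq_apply by blast
  qed
qed

end

section \<open>The quasi-kernel of a reduced power\<close>

lemma (in comm_group) generate_Un_subset_set_mult:
  assumes "subgroup S G" "A \<subseteq> carrier G"
  shows "generate G (S \<union> A) \<subseteq> S <#> generate G A"
proof (rule generate_subgroup_incl)
  have gen_A: "subgroup (generate G A) G"
    using generate_is_subgroup[OF assms(2)] .
  show "subgroup (S <#> generate G A) G"
    using mult_subgroups[OF assms(1) gen_A] .
  have "s \<in> S <#> generate G A" if "s \<in> S" for s
  proof -
    have "s = s \<otimes> \<one>"
      using that subgroup.mem_carrier[OF assms(1)] by simp
    then show ?thesis
      using that subgroup.one_closed[OF gen_A] unfolding set_mult_def by blast
  qed
  moreover have "a \<in> S <#> generate G A" if "a \<in> A" for a
  proof -
    have "a = \<one> \<otimes> a"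
      using that assms(2) by auto
    then show ?thesis
      using that subgroup.one_closed[OF assms(1)] generate.incl[of a A G] unfolding set_mult_def by blast
  qed
  ultimately show "S \<union> A \<subseteq> S <#> generate G A"
    by blast
qed

locale commutative_f_group_reduced_power =
  f_group_reduced_power G F U + commutative_f_group G F for G (structure) and F and U
begin

abbreviation QP
  where "QP \<equiv> qkernel P (up_act G U ` F)"

lemma up_set_block_of_subset_qkernel:
  assumes u: "u \<in> Q"
  shows "up_set G U (block_of G F u) \<subseteq> QP"
proof
  fix A assume "A \<in> up_set G U (block_of G F u)"
  then obtain s where s: "s \<in> UNIV \<rightarrow> block_of G F u" "A = cls s"
    by (auto simp: up_set_def)
  have s_block: "s i \<in> block_of G F u" for i
    using s(1) by blast
  have s_Seq: "s \<in> Seq"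
    using s_block block_of_subset_carrier[of G F u] by (intro Pi_I) blast
  have "\<exists>c\<in>up_act G U ` F. a A \<otimes>\<^bsub>P\<^esub> b A = c A"
    if ab: "a \<in> up_act G U ` F" "b \<in> up_act G U ` F" for a b
  proof -
    obtain \<alpha> \<beta> where \<alpha>\<beta>: "\<alpha> \<in> F" "\<beta> \<in> F" "a = up_act G U \<alpha>" "b = up_act G U \<beta>"
      using ab by blast
    have add_at_s: "(\<lambda>i. \<alpha> (s i) \<otimes> \<beta> (s i)) = (\<lambda>i. add_at G F u \<alpha> \<beta> (s i))"
      using s_block \<alpha>\<beta>(1,2) unfolding block_of_def by blast
    have "a A \<otimes>\<^bsub>P\<^esub> b A = cls (\<lambda>i. add_at G F u \<alpha> \<beta> (s i))"
      using \<alpha>\<beta> s(2) s_Seq by (simp add: up_act_up_class mult_ultrapower add_at_s)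
    also have "\<dots> = up_act G U (add_at G F u \<alpha> \<beta>) A"
      using s(2) s_Seq add_at_in_F[OF u \<alpha>\<beta>(1,2)] by (simp add: up_act_up_class)
    finally show ?thesis
      using add_at_in_F[OF u \<alpha>\<beta>(1,2)] by blast
  qed
  then show "A \<in> QP"
    using s(2) s_Seq up_class_in_carrier by (simp add: qkernel_def)
qed

lemma up_set_generate_blocks_subset:
  assumes "finite \<S>" "\<S> \<subseteq> block_of G F ` Q"
  shows "up_set G U (generate G (\<Union>\<S>)) \<subseteq> generate P QP"
  using assms
proof (induction \<S> rule: finite_induct)
  case empty
  have "up_set G U (generate G (\<Union>{})) = {\<one>\<^bsub>P\<^esub>}"
    by (simp add: generate_empty up_set_one)
  then show ?case
    using generate.one[of P QP] by simp
next
  case (insert S \<S>)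
  obtain u where u: "u \<in> Q" "S = block_of G F u"
    using insert.prems by auto
  have S: "subgroup S G"
    using subgroup_block_of[OF u(1)] u(2) by simp
  have \<S>_carrier: "\<Union>\<S> \<subseteq> carrier G"
    using insert.prems block_of_subset_carrier[of G F] by blast
  have "up_set G U (generate G (\<Union>(insert S \<S>))) \<subseteq> up_set G U (S <#> generate G (\<Union>\<S>))"
    by (rule up_set_mono) (use generate_Un_subset_set_mult[OF S \<S>_carrier] in simp)
  also have "\<dots> \<subseteq> up_set G U S <#>\<^bsub>P\<^esub> up_set G U (generate G (\<Union>\<S>))"
    by (rule up_set_set_mult[OF subgroup.subset[OF S] generate_incl[OF \<S>_carrier]])
  also have "\<dots> \<subseteq> generate P QP <#>\<^bsub>P\<^esub> generate P QP"
  proof (rule mono_set_mult)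
    show "up_set G U S \<subseteq> generate P QP"
      using up_set_block_of_subset_qkernel[OF u(1)] u(2) generate.incl[of _ QP P] by blast
    show "up_set G U (generate G (\<Union>\<S>)) \<subseteq> generate P QP"
      using insert.IH insert.prems by simp
  qed
  also have "\<dots> \<subseteq> generate P QP"
    by (auto simp: set_mult_def intro: generate.eng)
  finally show ?case .
qed

lemma generate_qkernel_ultrapower:
  assumes "finite (blocks G F)" "generate G Q = carrier G"
  shows "generate P QP = carrier P"
proof
  show "generate P QP \<subseteq> carrier P"
    by (rule group.generate_incl[OF group_ultrapower]) (auto simp: qkernel_def)
next
  define \<S> where "\<S> = block_of G F ` (Q - {\<one>})"
  have "\<S> \<subseteq> blocks G F"
    unfolding \<S>_def using block_of_in_blocks by blast
  then have "finite \<S>"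
    using assms(1) finite_subset by blast
  have \<S>_carrier: "\<Union>\<S> \<subseteq> carrier G"
    unfolding \<S>_def using block_of_subset_carrier[of G F] by blast
  have "Q \<subseteq> generate G (\<Union>\<S>)"
  proof
    fix q assume q: "q \<in> Q"
    show "q \<in> generate G (\<Union>\<S>)"
    proof (cases "q = \<one>")
      case False
      then have "q \<in> \<Union>\<S>"
        using q self_in_block_of unfolding \<S>_def by blast
      then show ?thesis
        by (rule generate.incl)
    qed (simp add: generate.one)
  qed
  then have "carrier G \<subseteq> generate G (\<Union>\<S>)"
    using assms(2) generate_subgroup_incl[OF _ generate_is_subgroup[OF \<S>_carrier]] by blast
  then have "carrier P \<subseteq> up_set G U (generate G (\<Union>\<S>))"
    unfolding up_set_carrier[symmetric] by (rule up_set_mono)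
  also have "\<dots> \<subseteq> generate P QP"
    using up_set_generate_blocks_subset[OF \<open>finite \<S>\<close>] unfolding \<S>_def by blast
  finally show "carrier P \<subseteq> generate P QP" .
qed

end

theorem mainTheorem13:
  fixes G :: "('v, 'b) monoid_scheme" and F :: "('v \<Rightarrow> 'v) set" and U :: "'i filter"
  assumes "near_vector_space G F"
    and "commutative_F G F"
    and "finite_block_type G F"
    and "is_ultrafilter U"
  shows "near_vector_space (ultrapower G U) (up_act G U ` F)"
proof -
  have fgroup: "fgroup G F" and generated: "generate G (qkernel G F) = carrier G"
    using assms(1) by (auto simp: near_vector_space_def)
  interpret comm_group G
    using fgroup_imp_comm_group[OF fgroup] .
  interpret commutative_f_group_reduced_power G F U
  proof unfold_locales
    show "fgroup G F" "commutative_F G F"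
      by (fact fgroup, fact assms(2))
    show "U \<noteq> bot"
      using assms(4) by (simp add: is_ultrafilter_def)
  qed
  show ?thesis
    unfolding near_vector_space_def
    using fgroup_ultrapower generate_qkernel_ultrapower[OF _ generated] assms(3)
    by (simp add: finite_block_type_def)
qed

end
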